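(* Let $X,Y$ be Polish spaces, $f\colon X\to Y$ a continuous map, and let $A\subseteq X$ be the set of points of $X$ which are not locally dense for $f$. Then $f(A)$ is meager in $Y$.
   Context: For a continuous map $f\colon X\to Y$ between Polish spaces, a point $x\in X$ is locally dense for $f$ if for every neighborhood $U$ of $x$ the set $\overline{f(U)}$ is a neighborhood of $f(x)$. *)

theory Defs
  imports "HOL-Analysis.Analysis"
begin

definition nhd_of :: "'a::topological_space set \<Rightarrow> 'a \<Rightarrow> bool" where
  "nhd_of N x \<longleftrightarrow> (\<exists>V. open V \<and> x \<in> V \<and> V \<subseteq> N)"

definition locally_dense :: "('a::topological_space \<Rightarrow> 'b::topological_space) \<Rightarrow> 'a \<Rightarrow> bool" where
  "locally_dense f x \<longleftrightarrow> (\<forall>U. nhd_of U x \<longrightarrow> nhd_of (closure (f ` U)) (f x))"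

definition nowhere_dense :: "'a::topological_space set \<Rightarrow> bool" where
  "nowhere_dense S \<longleftrightarrow> interior (closure S) = {}"

definition meager :: "'a::topological_space set \<Rightarrow> bool" where
  "meager S \<longleftrightarrow> (\<exists>F :: nat \<Rightarrow> 'a set. (\<forall>n. nowhere_dense (F n)) \<and> S \<subseteq> (\<Union>n. F n))"

end

theory Submission
  imports Defs
begin

text \<open>If x is not locally dense for f, some basic open set b around x has
  f x \<notin> interior (closure (f ` b)), so f x lies in the nowhere dense set
  f ` b - interior (closure (f ` b)). A countable basis yields countably many such sets.\<close>

lemma nowhere_dense_diff_interior_closure:
  "nowhere_dense (T - interior (closure T))"
proof -
  let ?R = "T - interior (closure T)"
  have "interior (closure ?R) \<subseteq> interior (closure T)"
    by (intro interior_mono closure_mono) blast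
  moreover have "closure ?R \<subseteq> - interior (closure T)"
    by (rule closure_minimal) auto
  ultimately show ?thesis
    unfolding nowhere_dense_def using interior_subset by blast
qed

lemma meager_countable_Union:
  assumes "countable \<F>" "\<forall>T\<in>\<F>. nowhere_dense T" "S \<subseteq> \<Union>\<F>"
  shows "meager S"
proof -
  let ?G = "insert {} \<F>"
  have range_G: "range (from_nat_into ?G) = ?G"
    using assms(1) by (intro range_from_nat_into) auto
  have "\<forall>T\<in>?G. nowhere_dense T"
    using assms(2) by (simp add: nowhere_dense_def)
  then have "\<forall>n. nowhere_dense (from_nat_into ?G n)"
    using range_G by blast
  moreover have "S \<subseteq> (\<Union>n. from_nat_into ?G n)"
    using assms(3) range_G by auto
  ultimately show ?thesis
    unfolding meager_def by blast
qed

lemma not_locally_dense_basisE: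
  assumes "topological_basis B" "\<not> locally_dense f x"
  obtains b where "b \<in> B" "x \<in> b" "f x \<notin> interior (closure (f ` b))"
proof -
  obtain U where "nhd_of U x" and not_nhd: "\<not> nhd_of (closure (f ` U)) (f x)"
    using assms(2) unfolding locally_dense_def by blast
  then obtain V where "open V" "x \<in> V" "V \<subseteq> U"
    unfolding nhd_of_def by blast
  then obtain b where b: "b \<in> B" "x \<in> b" "b \<subseteq> U"
    using topological_basisE[OF assms(1)] by (metis order_trans)
  have "interior (closure (f ` b)) \<subseteq> closure (f ` U)"
    using b(3) interior_subset by (metis closure_mono image_mono order_trans)
  then have "f x \<notin> interior (closure (f ` b))"
    using not_nhd unfolding nhd_of_def by blast
  with b(1,2) show thesis by (rule that)
qed

lemma meager_image_not_locally_dense: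
  fixes f :: "'a::second_countable_topology \<Rightarrow> 'b::topological_space"
  shows "meager (f ` {x. \<not> locally_dense f x})"
proof -
  obtain B :: "'a set set" where B: "countable B" "topological_basis B"
    using ex_countable_basis by blast
  have "f ` {x. \<not> locally_dense f x} \<subseteq> (\<Union>b\<in>B. f ` b - interior (closure (f ` b)))"
  proof clarify
    fix x assume "\<not> locally_dense f x"
    then obtain b where "b \<in> B" "x \<in> b" "f x \<notin> interior (closure (f ` b))"
      using not_locally_dense_basisE[OF B(2)] by blast
    then show "f x \<in> (\<Union>b\<in>B. f ` b - interior (closure (f ` b)))"
      by blast
  qed
  then show ?thesis
    using B(1) nowhere_dense_diff_interior_closure by (intro meager_countable_Union) auto
qed

theorem mainTheorem6:
  fixes f :: "'a::polish_space \<Rightarrow> 'b::polish_space"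
  assumes "continuous_on UNIV f"
  shows "meager (f ` {x. \<not> locally_dense f x})"
  by (rule meager_image_not_locally_dense)

end
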